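(* Let $\{G_i\}$ be a family of connected graphs with common induced subgraph $J$, embedded as $J_i\subseteq G_i$, such that $\{(G_i|J_i)\}$ is isometric, and let $H=\amalg\{(G_i|J_i)\}$. If, for each $i$, $A_i\subseteq V(G_i)$ is a local metric set for $G_i$, then $\bigcup_i A_i$ (viewed as a subset of $V(H)$) is a local metric set for $H$.
   Context: $d_G$ is shortest-path distance in $G$. A vertex $w$ distinguishes an edge $uv$ of $G$ if $d_G(w,u)\neq d_G(w,v)$; a local metric set of $G$ is a set $B\subseteq V(G)$ such that every edge of $G$ is distinguished by some vertex of $B$. $J$ is a common induced subgraph of each $G_i$ via injective maps $\iota_i:V(J)\to V(G_i)$ with $\iota_i(x)\iota_i(y)\in E(G_i)$ iff $xy\in E(J)$; $J_i$ is the induced image, $x^i=\iota_i(x)$. $H=\amalg\{(G_i|J_i)\}$ is obtained from the disjoint union of the $G_i$ by identifying, for each $x\in V(J)$, all $x^i$ into one vertex; each $G_i$ is regarded as a subgraph of $H$. The family is isometric if $d_{G_i}(a^i,b^i)=d_{G_j}(a^j,b^j)$ for all $i,j$ and $a,b\in V(J)$. *)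

theory Defs
  imports Main "HOL-Library.Extended_Nat"
begin

definition graph :: "'a set \<Rightarrow> 'a set set \<Rightarrow> bool" where
  "graph V E \<longleftrightarrow> (\<forall>e\<in>E. \<exists>u v. e = {u, v} \<and> u \<noteq> v \<and> u \<in> V \<and> v \<in> V)"

definition walk :: "'a set \<Rightarrow> 'a set set \<Rightarrow> 'a list \<Rightarrow> bool" where
  "walk V E xs \<longleftrightarrow> xs \<noteq> [] \<and> set xs \<subseteq> V \<and>
     (\<forall>k. Suc k < length xs \<longrightarrow> {xs ! k, xs ! Suc k} \<in> E)"

text \<open>Shortest-path distance (infinity if no walk exists).\<close>
definition dist :: "'a set \<Rightarrow> 'a set set \<Rightarrow> 'a \<Rightarrow> 'a \<Rightarrow> enat" where
  "dist V E u v = Inf {enat (length xs - 1) | xs. walk V E xs \<and> hd xs = u \<and> last xs = v}"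

definition connected_graph :: "'a set \<Rightarrow> 'a set set \<Rightarrow> bool" where
  "connected_graph V E \<longleftrightarrow> graph V E \<and> (\<forall>u\<in>V. \<forall>v\<in>V. dist V E u v \<noteq> \<infinity>)"

definition distinguishes :: "'a set \<Rightarrow> 'a set set \<Rightarrow> 'a \<Rightarrow> 'a \<Rightarrow> 'a \<Rightarrow> bool" where
  "distinguishes V E w u v \<longleftrightarrow> dist V E w u \<noteq> dist V E w v"

definition local_metric_set :: "'a set \<Rightarrow> 'a set set \<Rightarrow> 'a set \<Rightarrow> bool" where
  "local_metric_set V E B \<longleftrightarrow> B \<subseteq> V \<and>
     (\<forall>u v. {u, v} \<in> E \<longrightarrow> (\<exists>w\<in>B. distinguishes V E w u v))"

definition induced_embedding ::
  "'j set \<Rightarrow> 'j set set \<Rightarrow> 'v set \<Rightarrow> 'v set set \<Rightarrow> ('j \<Rightarrow> 'v) \<Rightarrow> bool" where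
  "induced_embedding VJ EJ V E iota \<longleftrightarrow> inj_on iota VJ \<and> iota ` VJ \<subseteq> V \<and>
     (\<forall>x\<in>VJ. \<forall>y\<in>VJ. {iota x, iota y} \<in> E \<longleftrightarrow> {x, y} \<in> EJ)"

text \<open>Amalgamation H: the disjoint union of the G_i with all copies iota i x of a
  vertex x of J identified to the single vertex Inl x; every other vertex v of G_i
  becomes Inr (i, v).  amal_emb i is the embedding of G_i into H.\<close>
definition amal_emb :: "'j set \<Rightarrow> ('i \<Rightarrow> 'j \<Rightarrow> 'v) \<Rightarrow> 'i \<Rightarrow> 'v \<Rightarrow> 'j + ('i \<times> 'v)" where
  "amal_emb VJ iota i v =
     (if v \<in> iota i ` VJ then Inl (the_inv_into VJ (iota i) v) else Inr (i, v))"

definition amal_V :: "'i set \<Rightarrow> ('i \<Rightarrow> 'v set) \<Rightarrow> 'j set \<Rightarrow> ('i \<Rightarrow> 'j \<Rightarrow> 'v)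
    \<Rightarrow> ('j + ('i \<times> 'v)) set" where
  "amal_V I VG VJ iota = (\<Union>i\<in>I. amal_emb VJ iota i ` VG i)"

definition amal_E :: "'i set \<Rightarrow> ('i \<Rightarrow> 'v set set) \<Rightarrow> 'j set \<Rightarrow> ('i \<Rightarrow> 'j \<Rightarrow> 'v)
    \<Rightarrow> ('j + ('i \<times> 'v)) set set" where
  "amal_E I EG VJ iota = (\<Union>i\<in>I. (\<lambda>e. amal_emb VJ iota i ` e) ` EG i)"

end

theory Submission
  imports Defs
begin

text \<open>Every copy of \<open>G\<^sub>i\<close> sits isometrically inside the amalgamation \<open>H\<close>.
  A shortest walk in \<open>H\<close> between two vertices of \<open>G\<^sub>i\<close> splits at its interior
  vertices in \<open>J\<close> into pieces that each run inside a single copy \<open>G\<^sub>j\<close>; a piece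
  in a foreign copy joins two vertices of \<open>J\<close>, so by isometry of the family it can
  be replaced by a walk of the same length in \<open>G\<^sub>i\<close>. Hence \<open>d\<^sub>H = d\<^sub>G\<^sub>i\<close> on \<open>G\<^sub>i\<close>,
  every edge of \<open>H\<close> is an edge of some \<open>G\<^sub>i\<close>, and the vertex of \<open>A\<^sub>i\<close> that
  distinguishes it in \<open>G\<^sub>i\<close> still distinguishes it in \<open>H\<close>.\<close>

lemma walk_Cons_Cons: "walk V E (x # y # zs) \<longleftrightarrow> x \<in> V \<and> {x, y} \<in> E \<and> walk V E (y # zs)"
  unfolding walk_def by (auto simp: nth_Cons split: nat.splits)

lemma walk_singleton [simp]: "walk V E [x] \<longleftrightarrow> x \<in> V"
  by (auto simp: walk_def)

lemma walk_nonempty: "walk V E xs \<Longrightarrow> xs \<noteq> []"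
  by (simp add: walk_def)

lemma walk_Cons_in: "walk V E (x # xs) \<Longrightarrow> x \<in> V"
  by (simp add: walk_def)

lemma walk_append_iff:
  "as \<noteq> [] \<Longrightarrow> walk V E (as @ y # bs) \<longleftrightarrow> walk V E (as @ [y]) \<and> walk V E (y # bs)"
proof (induction as rule: list_nonempty_induct)
  case (single x)
  then show ?case by (auto simp: walk_Cons_Cons dest: walk_Cons_in)
next
  case (cons x xs)
  then show ?case by (cases xs) (auto simp: walk_Cons_Cons dest: walk_Cons_in)
qed

lemma walk_concat:
  assumes xs: "walk V E xs" and ys: "walk V E ys" and joint: "last xs = hd ys"
  shows "walk V E (xs @ tl ys)"
proof -
  obtain y ys' where ys_eq: "ys = y # ys'" using walk_nonempty[OF ys] by (cases ys) auto
  obtain xs' where xs_eq: "xs = xs' @ [y]"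
    using walk_nonempty[OF xs] joint ys_eq by (metis append_butlast_last_id list.sel(1))
  show ?thesis
  proof (cases "xs' = []")
    case True
    then show ?thesis using ys ys_eq xs_eq by simp
  next
    case False
    have "walk V E (xs' @ y # ys')"
      using walk_append_iff[OF False] xs ys unfolding xs_eq ys_eq by blast
    then show ?thesis using xs_eq ys_eq by simp
  qed
qed

lemma dist_le_enat_iff:
  "dist V E u v \<le> enat n \<longleftrightarrow> (\<exists>xs. walk V E xs \<and> hd xs = u \<and> last xs = v \<and> length xs \<le> Suc n)"
proof
  let ?L = "{enat (length xs - 1) | xs. walk V E xs \<and> hd xs = u \<and> last xs = v}"
  assume le: "dist V E u v \<le> enat n"
  have "?L \<noteq> {}"
  proof
    assume "?L = {}"
    then have "dist V E u v = \<infinity>" unfolding dist_def by (simp add: Inf_enat_def)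
    with le show False by simp
  qed
  then have "Inf ?L \<in> ?L" unfolding Inf_enat_def by (auto intro: LeastI)
  then obtain xs where "walk V E xs" "hd xs = u" "last xs = v" "dist V E u v = enat (length xs - 1)"
    unfolding dist_def by blast
  with le show "\<exists>xs. walk V E xs \<and> hd xs = u \<and> last xs = v \<and> length xs \<le> Suc n" by auto
next
  assume "\<exists>xs. walk V E xs \<and> hd xs = u \<and> last xs = v \<and> length xs \<le> Suc n"
  then obtain xs where xs: "walk V E xs" "hd xs = u" "last xs = v" "length xs \<le> Suc n" by blast
  then have "dist V E u v \<le> enat (length xs - 1)" unfolding dist_def by (auto intro: Inf_lower)
  also have "\<dots> \<le> enat n" using xs(4) by simp
  finally show "dist V E u v \<le> enat n" .
qed

lemma walk_dist_le: "walk V E xs \<Longrightarrow> dist V E (hd xs) (last xs) \<le> enat (length xs - 1)"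
  unfolding dist_def by (auto intro: Inf_lower)

lemma dist_triangle: "dist V E u w \<le> dist V E u v + dist V E v w"
proof (cases "dist V E u v = \<infinity> \<or> dist V E v w = \<infinity>")
  case False
  then obtain m n where m: "dist V E u v = enat m" and n: "dist V E v w = enat n" by auto
  obtain xs where xs: "walk V E xs" "hd xs = u" "last xs = v" "length xs \<le> Suc m"
    using m dist_le_enat_iff[of V E u v m] by (metis order_refl)
  obtain ys where ys: "walk V E ys" "hd ys = v" "last ys = w" "length ys \<le> Suc n"
    using n dist_le_enat_iff[of V E v w n] by (metis order_refl)
  have "walk V E (xs @ tl ys)" using xs ys by (intro walk_concat) simp_all
  moreover have "hd (xs @ tl ys) = u" using xs walk_nonempty[OF xs(1)] by simp
  moreover have "last (xs @ tl ys) = w"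
    using xs(3) ys(2,3) walk_nonempty[OF ys(1)] by (cases ys) auto
  moreover have "length (xs @ tl ys) \<le> Suc (m + n)" using xs(4) ys(4) by simp
  ultimately have "dist V E u w \<le> enat (m + n)" unfolding dist_le_enat_iff by blast
  then show ?thesis using m n by simp
next
  case True
  then have "dist V E u v + dist V E v w = \<infinity>" by auto
  then show ?thesis by simp
qed

lemma walk_map:
  assumes "walk V E xs" "f ` V \<subseteq> V'" "\<And>u v. {u, v} \<in> E \<Longrightarrow> {f u, f v} \<in> E'"
  shows "walk V' E' (map f xs)"
  using assms by (auto simp: walk_def image_subset_iff)

lemma dist_map_le:
  assumes "f ` V \<subseteq> V'" "\<And>u v. {u, v} \<in> E \<Longrightarrow> {f u, f v} \<in> E'"
  shows "dist V' E' (f u) (f v) \<le> dist V E u v"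
  unfolding dist_def
proof (rule Inf_superset_mono, safe)
  fix xs assume xs: "walk V E xs"
  then have "walk V' E' (map f xs)" using walk_map assms by blast
  then show "\<exists>ys. enat (length xs - 1) = enat (length ys - 1) \<and> walk V' E' ys \<and>
      hd ys = f (hd xs) \<and> last ys = f (last xs)"
    using walk_nonempty[OF xs] by (intro exI[of _ "map f xs"]) (simp add: hd_map last_map)
qed

lemma walk_lift:
  assumes xs: "walk V' E' xs" and img: "set xs \<subseteq> f ` V"
    and reflect: "\<And>u v. u \<in> V \<Longrightarrow> v \<in> V \<Longrightarrow> {f u, f v} \<in> E' \<Longrightarrow> {u, v} \<in> E"
  shows "\<exists>ys. walk V E ys \<and> map f ys = xs"
proof (intro exI conjI)
  let ?ys = "map (inv_into V f) xs"
  have in_img: "j < length xs \<Longrightarrow> xs ! j \<in> f ` V" for j using img nth_mem by blast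
  show "map f ?ys = xs" using img by (induction xs) (auto simp: f_inv_into_f)
  show "walk V E ?ys" unfolding walk_def
  proof (intro conjI allI impI)
    show "?ys \<noteq> []" using walk_nonempty[OF xs] by simp
    show "set ?ys \<subseteq> V" using img by (auto intro: inv_into_into)
    fix k assume k: "Suc k < length ?ys"
    have "{xs ! k, xs ! Suc k} \<in> E'" using xs k by (simp add: walk_def)
    then show "{?ys ! k, ?ys ! Suc k} \<in> E"
      using k in_img[of k] in_img[of "Suc k"]
      by (intro reflect) (simp_all add: f_inv_into_f inv_into_into)
  qed
qed

lemma in_set_butlast_tl_split:
  assumes "z \<in> set (butlast (tl xs))"
  obtains as bs where "xs = as @ z # bs" "as \<noteq> []" "bs \<noteq> []"
proof -
  obtain x ys where xs: "xs = x # ys" using assms by (cases xs) auto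
  have "z \<in> set (butlast ys)" using assms xs by simp
  then obtain us ws where split: "butlast ys = us @ z # ws" by (meson split_list)
  have "ys \<noteq> []" using split by auto
  then have "ys = butlast ys @ [last ys]" by simp
  then have "xs = (x # us) @ z # (ws @ [last ys])" using xs split by simp
  then show ?thesis using that by blast
qed

locale amalgamation =
  fixes I :: "'i set" and VG :: "'i \<Rightarrow> 'v set" and EG :: "'i \<Rightarrow> 'v set set"
    and VJ :: "'j set" and EJ :: "'j set set" and iota :: "'i \<Rightarrow> 'j \<Rightarrow> 'v"
  assumes graph: "\<And>i. i \<in> I \<Longrightarrow> graph (VG i) (EG i)"
    and embedding: "\<And>i. i \<in> I \<Longrightarrow> induced_embedding VJ EJ (VG i) (EG i) (iota i)"
    and isometric: "\<And>i j a b. \<lbrakk>i \<in> I; j \<in> I; a \<in> VJ; b \<in> VJ\<rbrakk> \<Longrightarrow>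
          dist (VG i) (EG i) (iota i a) (iota i b) = dist (VG j) (EG j) (iota j a) (iota j b)"
begin

abbreviation "em \<equiv> amal_emb VJ iota"
abbreviation "VH \<equiv> amal_V I VG VJ iota"
abbreviation "EH \<equiv> amal_E I EG VJ iota"

lemma em_eq_Inl_iff: "i \<in> I \<Longrightarrow> em i v = Inl x \<longleftrightarrow> x \<in> VJ \<and> v = iota i x"
  using embedding[of i]
  by (auto simp: amal_emb_def induced_embedding_def the_inv_into_f_f the_inv_into_into)

lemma em_eq_Inr_iff: "em i v = Inr (k, w) \<longleftrightarrow> k = i \<and> w = v \<and> v \<notin> iota i ` VJ"
  by (auto simp: amal_emb_def)

lemma inj_em: assumes "i \<in> I" shows "inj (em i)"
proof (rule injI)
  fix p q assume eq: "em i p = em i q"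
  show "p = q"
  proof (cases "em i p")
    case (Inl a)
    moreover have "em i q = Inl a" using Inl eq by simp
    ultimately have "p = iota i a" "q = iota i a" using em_eq_Inl_iff[OF assms] by blast+
    then show ?thesis by simp
  next
    case (Inr r)
    then obtain k w where "em i p = Inr (k, w)" "em i q = Inr (k, w)" using eq by (cases r) auto
    then show ?thesis by (simp add: em_eq_Inr_iff)
  qed
qed

lemma em_eq_em_imp_iota:
  assumes "i \<in> I" "j \<in> I" "i \<noteq> j" "em i p = em j q"
  shows "\<exists>a\<in>VJ. p = iota i a \<and> q = iota j a"
proof (cases "em i p")
  case (Inl a)
  moreover have "em j q = Inl a" using Inl assms(4) by simp
  ultimately have "a \<in> VJ" "p = iota i a" "q = iota j a"
    using em_eq_Inl_iff[OF assms(1)] em_eq_Inl_iff[OF assms(2)] by blast+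
  then show ?thesis by blast
next
  case (Inr r)
  then obtain k w where "em i p = Inr (k, w)" "em j q = Inr (k, w)" using assms(4) by (cases r) auto
  then show ?thesis using assms(3) by (simp add: em_eq_Inr_iff)
qed

lemma em_iota: "i \<in> I \<Longrightarrow> a \<in> VJ \<Longrightarrow> em i (iota i a) = Inl a"
  by (simp add: em_eq_Inl_iff)

lemma iota_edge_iff:
  "i \<in> I \<Longrightarrow> a \<in> VJ \<Longrightarrow> b \<in> VJ \<Longrightarrow> {iota i a, iota i b} \<in> EG i \<longleftrightarrow> {a, b} \<in> EJ"
  using embedding by (auto simp: induced_embedding_def)

lemma Inl_in_VH_imp_in_VJ: "Inl a \<in> VH \<Longrightarrow> a \<in> VJ"
  unfolding amal_V_def using em_eq_Inl_iff by fastforce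

lemma edge_in_copy:
  assumes "{x, y} \<in> EH"
  obtains j p q where "j \<in> I" "{p, q} \<in> EG j" "x = em j p" "y = em j q"
proof -
  obtain j e where j: "j \<in> I" "e \<in> EG j" "{x, y} = em j ` e"
    using assms unfolding amal_E_def by blast
  then obtain p q where e: "e = {p, q}" using graph unfolding graph_def by blast
  then consider "x = em j p" "y = em j q" | "x = em j q" "y = em j p"
    using j(3) by (auto simp: doubleton_eq_iff)
  then show ?thesis
    using that[of j p q] that[of j q p] j(1,2) e by cases (simp_all add: insert_commute)
qed

lemma em_edge_reflect:
  assumes i: "i \<in> I" and edge: "{em i p, em i q} \<in> EH"
  shows "{p, q} \<in> EG i"
proof -
  obtain k c d where k: "k \<in> I" "{c, d} \<in> EG k" "em i p = em k c" "em i q = em k d"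
    using edge by (rule edge_in_copy)
  show ?thesis
  proof (cases "k = i")
    case True
    then show ?thesis using k inj_em[OF i] by (simp add: inj_eq)
  next
    case False
    obtain a where a: "a \<in> VJ" "c = iota k a" "p = iota i a"
      using em_eq_em_imp_iota[OF k(1) i False k(3)[symmetric]] by blast
    obtain b where b: "b \<in> VJ" "d = iota k b" "q = iota i b"
      using em_eq_em_imp_iota[OF k(1) i False k(4)[symmetric]] by blast
    have "{a, b} \<in> EJ" using k(2) iota_edge_iff[OF k(1) a(1) b(1)] a(2) b(2) by simp
    then show ?thesis using iota_edge_iff[OF i a(1) b(1)] a(3) b(3) by simp
  qed
qed

lemma edge_in_VG:
  assumes "j \<in> I" "{p, q} \<in> EG j"
  shows "p \<in> VG j \<and> q \<in> VG j"
proof -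
  obtain u v where "{p, q} = {u, v}" "u \<in> VG j" "v \<in> VG j"
    using graph[OF assms(1)] assms(2) unfolding graph_def by blast
  then have "{p, q} \<subseteq> VG j" by simp
  then show ?thesis by simp
qed

lemma em_edge:
  assumes "i \<in> I" "{p, q} \<in> EG i"
  shows "{em i p, em i q} \<in> EH"
proof -
  have "{em i p, em i q} = em i ` {p, q}" by simp
  then show ?thesis using assms unfolding amal_E_def by blast
qed

lemma em_image_subset_VH: "i \<in> I \<Longrightarrow> em i ` VG i \<subseteq> VH"
  unfolding amal_V_def by blast

lemma Inr_neighbour_in_copy:
  assumes "{Inr (j, v), w} \<in> EH"
  shows "j \<in> I" "Inr (j, v) \<in> em j ` VG j" "w \<in> em j ` VG j"
proof -
  obtain k p q where k: "k \<in> I" "{p, q} \<in> EG k" "Inr (j, v) = em k p" "w = em k q"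
    using assms by (rule edge_in_copy)
  moreover have "k = j" using k(3) em_eq_Inr_iff by metis
  ultimately show "j \<in> I" "Inr (j, v) \<in> em j ` VG j" "w \<in> em j ` VG j"
    using edge_in_VG by auto
qed

lemma walk_from_Inr_in_copy:
  "walk VH EH (Inr (j, v) # zs) \<Longrightarrow> set (butlast zs) \<subseteq> range Inr \<Longrightarrow> set zs \<subseteq> em j ` VG j"
proof (induction zs arbitrary: v)
  case (Cons y zs)
  have "{Inr (j, v), y} \<in> EH" using Cons.prems(1) by (simp add: walk_Cons_Cons)
  then have y: "y \<in> em j ` VG j" by (rule Inr_neighbour_in_copy)
  show ?case
  proof (cases "zs = []")
    case False
    then obtain k c where yc: "y = Inr (k, c)" using Cons.prems(2) by auto
    moreover obtain d where "y = em j d" using y by blast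
    ultimately have "k = j" by (metis em_eq_Inr_iff)
    have "set (butlast zs) \<subseteq> range Inr" using Cons.prems(2) False by (auto dest: in_set_butlastD)
    then have "set zs \<subseteq> em j ` VG j"
      using Cons.IH[of c] Cons.prems(1) yc \<open>k = j\<close> by (simp add: walk_Cons_Cons)
    then show ?thesis using y by simp
  qed (use y in simp)
qed simp

lemma walk_in_copy:
  assumes walk: "walk VH EH xs" and interior: "set (butlast (tl xs)) \<subseteq> range Inr"
  obtains j where "j \<in> I" "set xs \<subseteq> em j ` VG j"
proof (cases xs)
  case Nil
  then show ?thesis using walk walk_nonempty by blast
next
  case (Cons x ys)
  show ?thesis
  proof (cases ys)
    case Nil
    then show ?thesis using that walk Cons unfolding amal_V_def by auto
  next
    case (Cons y zs)
    note xs = \<open>xs = x # ys\<close> Cons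
    show ?thesis
    proof (cases "zs = []")
      case True
      have "{x, y} \<in> EH" using walk xs True by (simp add: walk_Cons_Cons)
      then obtain j p q where "j \<in> I" "{p, q} \<in> EG j" "x = em j p" "y = em j q"
        by (rule edge_in_copy)
      then show ?thesis using that xs True edge_in_VG by auto
    next
      case False
      then obtain j v where y: "y = Inr (j, v)" using interior xs by auto
      have "{y, x} \<in> EH" using walk xs by (simp add: walk_Cons_Cons insert_commute)
      then have copy: "j \<in> I" "y \<in> em j ` VG j" "x \<in> em j ` VG j"
        unfolding y by (rule Inr_neighbour_in_copy)+
      have "set zs \<subseteq> em j ` VG j"
        using walk_from_Inr_in_copy[of j v zs] walk interior xs y False by (simp add: walk_Cons_Cons)
      then show ?thesis using that copy xs by auto
    qed
  qed
qed

lemma dist_le_copy_walk: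
  assumes i: "i \<in> I" and j: "j \<in> I" and walk: "walk (VG j) (EG j) ys"
    and hd: "em j (hd ys) = em i p" and last: "em j (last ys) = em i q"
  shows "dist (VG i) (EG i) p q \<le> enat (length ys - 1)"
proof (cases "j = i")
  case True
  then have "hd ys = p" "last ys = q" using hd last inj_em[OF i] by (simp_all add: inj_eq)
  then show ?thesis using walk_dist_le[OF walk] True by simp
next
  case False
  obtain a where a: "a \<in> VJ" "hd ys = iota j a" "p = iota i a"
    using em_eq_em_imp_iota[OF j i False hd] by blast
  obtain b where b: "b \<in> VJ" "last ys = iota j b" "q = iota i b"
    using em_eq_em_imp_iota[OF j i False last] by blast
  have "dist (VG j) (EG j) (iota j a) (iota j b) \<le> enat (length ys - 1)"
    using walk_dist_le[OF walk] a(2) b(2) by simp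
  then show ?thesis using isometric[OF i j a(1) b(1)] a(3) b(3) by simp
qed

lemma dist_le_amal_walk:
  "i \<in> I \<Longrightarrow> walk VH EH xs \<Longrightarrow> hd xs = em i p \<Longrightarrow> last xs = em i q \<Longrightarrow>
   dist (VG i) (EG i) p q \<le> enat (length xs - 1)"
proof (induction "length xs" arbitrary: xs p q rule: less_induct)
  case less
  note i = less.prems(1)
  show ?case
  proof (cases "\<exists>a. Inl a \<in> set (butlast (tl xs))")
    case True
    then obtain a where "Inl a \<in> set (butlast (tl xs))" by blast
    then obtain as bs where xs: "xs = as @ Inl a # bs" and ne: "as \<noteq> []" "bs \<noteq> []"
      by (rule in_set_butlast_tl_split)
    have w1: "walk VH EH (as @ [Inl a])" and w2: "walk VH EH (Inl a # bs)"
      using walk_append_iff[OF ne(1)] less.prems(2) xs by blast+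
    have "a \<in> VJ" using walk_Cons_in[OF w2] by (rule Inl_in_VH_imp_in_VJ)
    then have a: "em i (iota i a) = Inl a" by (rule em_iota[OF i])
    have "length (as @ [Inl a]) < length xs" "hd (as @ [Inl a]) = em i p"
      using xs ne less.prems(3) by simp_all
    from less.hyps[OF this(1) i w1 this(2)] a
    have d1: "dist (VG i) (EG i) p (iota i a) \<le> enat (length as)" by simp
    have "length (Inl a # bs) < length xs" "last (Inl a # bs) = em i q"
      using xs ne less.prems(4) by simp_all
    from less.hyps[OF this(1) i w2 _ this(2)] a
    have d2: "dist (VG i) (EG i) (iota i a) q \<le> enat (length bs)" by simp
    have "dist (VG i) (EG i) p q
        \<le> dist (VG i) (EG i) p (iota i a) + dist (VG i) (EG i) (iota i a) q"
      by (rule dist_triangle)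
    also have "\<dots> \<le> enat (length as) + enat (length bs)" using d1 d2 by (rule add_mono)
    also have "\<dots> = enat (length xs - 1)" using xs by simp
    finally show ?thesis .
  next
    case False
    have "set (butlast (tl xs)) \<subseteq> range Inr"
    proof
      fix z assume "z \<in> set (butlast (tl xs))"
      with False show "z \<in> range Inr" by (cases z) auto
    qed
    with less.prems(2) obtain j where j: "j \<in> I" "set xs \<subseteq> em j ` VG j"
      by (rule walk_in_copy)
    obtain ys where ys: "walk (VG j) (EG j) ys" "map (em j) ys = xs"
      using walk_lift[OF less.prems(2) j(2) em_edge_reflect[OF j(1)]] by blast
    have "ys \<noteq> []" using walk_nonempty[OF ys(1)] .
    then have "em j (hd ys) = em i p" "em j (last ys) = em i q"
      using ys(2) less.prems(3,4) by (auto simp: hd_map last_map)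
    from dist_le_copy_walk[OF i j(1) ys(1) this] show ?thesis using ys(2) by auto
  qed
qed

lemma dist_amal_emb:
  assumes i: "i \<in> I"
  shows "dist VH EH (em i p) (em i q) = dist (VG i) (EG i) p q"
proof (rule antisym)
  show "dist VH EH (em i p) (em i q) \<le> dist (VG i) (EG i) p q"
    using dist_map_le[OF em_image_subset_VH[OF i]] em_edge[OF i] by blast
  show "dist (VG i) (EG i) p q \<le> dist VH EH (em i p) (em i q)"
  proof (cases "dist VH EH (em i p) (em i q)")
    case (enat n)
    then obtain xs where "walk VH EH xs" "hd xs = em i p" "last xs = em i q" "length xs \<le> Suc n"
      using dist_le_enat_iff by (metis order_refl)
    then have "dist (VG i) (EG i) p q \<le> enat (length xs - 1)" by (intro dist_le_amal_walk[OF i])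
    also have "\<dots> \<le> enat n" using \<open>length xs \<le> Suc n\<close> by simp
    finally show ?thesis using enat by simp
  qed simp
qed

end

theorem lemma4:
  fixes I :: "'i set"
    and VG :: "'i \<Rightarrow> 'v set" and EG :: "'i \<Rightarrow> 'v set set"
    and VJ :: "'j set" and EJ :: "'j set set"
    and iota :: "'i \<Rightarrow> 'j \<Rightarrow> 'v"
    and A :: "'i \<Rightarrow> 'v set"
  assumes conn: "\<And>i. i \<in> I \<Longrightarrow> finite (VG i) \<and> connected_graph (VG i) (EG i)"
    and J: "finite VJ" "graph VJ EJ"
    and emb: "\<And>i. i \<in> I \<Longrightarrow> induced_embedding VJ EJ (VG i) (EG i) (iota i)"
    and iso: "\<And>i j a b. \<lbrakk>i \<in> I; j \<in> I; a \<in> VJ; b \<in> VJ\<rbrakk> \<Longrightarrow>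
               dist (VG i) (EG i) (iota i a) (iota i b) = dist (VG j) (EG j) (iota j a) (iota j b)"
    and lms: "\<And>i. i \<in> I \<Longrightarrow> local_metric_set (VG i) (EG i) (A i)"
  shows "local_metric_set (amal_V I VG VJ iota) (amal_E I EG VJ iota)
           (\<Union>i\<in>I. amal_emb VJ iota i ` A i)"
proof -
  have "\<And>i. i \<in> I \<Longrightarrow> graph (VG i) (EG i)" using conn unfolding connected_graph_def by blast
  then interpret amalgamation I VG EG VJ EJ iota using emb iso by (rule amalgamation.intro)
  show ?thesis
    unfolding local_metric_set_def
  proof (intro conjI allI impI)
    show "(\<Union>i\<in>I. em i ` A i) \<subseteq> VH"
      using lms unfolding amal_V_def local_metric_set_def by blast
    fix u v assume "{u, v} \<in> EH"
    then obtain i p q where i: "i \<in> I" "{p, q} \<in> EG i" and uv: "u = em i p" "v = em i q"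
      by (rule edge_in_copy)
    obtain w where w: "w \<in> A i" "distinguishes (VG i) (EG i) w p q"
      using lms[OF i(1)] i(2) unfolding local_metric_set_def by blast
    then have "distinguishes VH EH (em i w) u v"
      unfolding uv distinguishes_def dist_amal_emb[OF i(1)] by simp
    moreover have "em i w \<in> (\<Union>i\<in>I. em i ` A i)" using i(1) w(1) by blast
    ultimately show "\<exists>w\<in>\<Union>i\<in>I. em i ` A i. distinguishes VH EH w u v" by blast
  qed
qed

end
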